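(* Let $T$ be a tournament and $X=(v_1,\dots,v_k)$, $k\ge2$, a list of distinct vertices of $T$ satisfying the $U$-property. Then $T[\{v_1,\dots,v_k\}]$ is the tournament $U_k$ (with $v_i$ playing the role of the $i$-th vertex of $U_k$).
   Context: A tournament is a digraph with exactly one arc between each pair of distinct vertices; $d^-(v)$ is the in-degree of $v$ in $T$. A list $(v_1,\dots,v_k)$ with $k\ge2$ satisfies the $U$-property if $d^-(v_1)=1$ and, for each $i\in\{2,\dots,k\}$, $(v_i,v_{i-1})\in A(T)$ and $d^-(v_i)=i-1$. $U_k$ is the tournament on $\{v_1,\dots,v_k\}$ with arc set $\{(v_{i+1},v_i): i\in[k-1]\}\cup\{(v_i,v_j): 1\le i<k,\ i+1<j\le k\}$. *)

theory Defs
  imports Main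
begin

definition tournament :: "'a set \<Rightarrow> ('a \<times> 'a) set \<Rightarrow> bool" where
  "tournament V A \<longleftrightarrow> finite V \<and> A \<subseteq> V \<times> V \<and> (\<forall>v. (v, v) \<notin> A) \<and>
     (\<forall>u\<in>V. \<forall>v\<in>V. u \<noteq> v \<longrightarrow> ((u, v) \<in> A \<longleftrightarrow> (v, u) \<notin> A))"

definition indeg :: "'a set \<Rightarrow> ('a \<times> 'a) set \<Rightarrow> 'a \<Rightarrow> nat" where
  "indeg V A v = card {u \<in> V. (u, v) \<in> A}"

text \<open>U-property for a list; the list is 1-indexed in the paper: v_i = xs ! (i - 1).\<close>
definition U_property :: "'a set \<Rightarrow> ('a \<times> 'a) set \<Rightarrow> 'a list \<Rightarrow> bool" where
  "U_property V A xs \<longleftrightarrow> length xs \<ge> 2 \<and>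
     indeg V A (xs ! 0) = 1 \<and>
     (\<forall>i\<in>{2..length xs}. (xs ! (i - 1), xs ! (i - 2)) \<in> A \<and> indeg V A (xs ! (i - 1)) = i - 1)"

definition U_arcs :: "nat \<Rightarrow> (nat \<times> nat) set" where
  "U_arcs k = {(i + 1, i) | i. i \<in> {1..k - 1}} \<union> {(i, j) | i j. 1 \<le> i \<and> i < k \<and> i + 1 < j \<and> j \<le> k}"

end

theory Submission
  imports Defs
begin

text \<open>
  Index the vertices from 0, so that \<open>x\<^sub>n = xs ! n\<close> has in-degree \<open>max 1 n\<close>.
  By strong induction on n, the in-neighbourhood of every \<open>x\<^sub>n\<close> except the last is
  exactly \<open>{x\<^sub>m | m < n - 1} \<union> {x\<^sub>n\<^sub>+\<^sub>1}\<close>: the arc from \<open>x\<^sub>n\<^sub>+\<^sub>1\<close> is given, each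
  \<open>x\<^sub>m\<close> with \<open>m < n - 1\<close> beats \<open>x\<^sub>n\<close> because by induction \<open>x\<^sub>n\<close> is not an in-neighbour
  of \<open>x\<^sub>m\<close>, and these \<open>max 1 n\<close> vertices already exhaust the in-degree. The arcs at
  the last vertex then follow from the in-neighbourhoods of the others.
\<close>

lemma tournament_arc_iff_not_reverse:
  assumes "tournament V A" "u \<in> V" "v \<in> V" "u \<noteq> v"
  shows "(u, v) \<in> A \<longleftrightarrow> (v, u) \<notin> A"
  using assms unfolding tournament_def by blast

lemma tournament_in_nbrs_eq_if_card_eq:
  assumes "tournament V A" "S \<subseteq> {u \<in> V. (u, v) \<in> A}" "card S = indeg V A v"
  shows "{u \<in> V. (u, v) \<in> A} = S"
proof -
  have "finite {u \<in> V. (u, v) \<in> A}"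
    using assms(1) unfolding tournament_def by simp
  then show ?thesis
    using assms(2,3) card_subset_eq unfolding indeg_def by metis
qed

lemma nth_in_image_nth_iff:
  assumes "distinct xs" "S \<subseteq> {..<length xs}" "a < length xs"
  shows "xs ! a \<in> (!) xs ` S \<longleftrightarrow> a \<in> S"
  using assms by (intro inj_on_image_mem_iff[OF inj_on_nth[of xs "{..<length xs}"]]) auto

context
  fixes V :: "'a set" and A :: "('a \<times> 'a) set" and xs :: "'a list"
  assumes tournament: "tournament V A"
    and set_xs: "set xs \<subseteq> V"
    and distinct_xs: "distinct xs"
    and U_property: "U_property V A xs"
begin

lemma U_arc_Suc:
  assumes "n + 1 < length xs"
  shows "(xs ! (n + 1), xs ! n) \<in> A"
proof -
  have "n + 2 \<in> {2..length xs}"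
    using assms by simp
  with U_property show ?thesis
    unfolding U_property_def by fastforce
qed

lemma U_indeg:
  assumes "n < length xs"
  shows "indeg V A (xs ! n) = max 1 n"
proof (cases "n = 0")
  case True
  with U_property show ?thesis
    unfolding U_property_def by simp
next
  case False
  with assms have "n + 1 \<in> {2..length xs}"
    by simp
  with U_property False show ?thesis
    unfolding U_property_def by fastforce
qed

lemma U_in_nbrs:
  assumes "n + 1 < length xs"
  shows "{u \<in> V. (u, xs ! n) \<in> A} = (!) xs ` ({..<n - 1} \<union> {n + 1})"
  using assms
proof (induction n rule: less_induct)
  case (less n)
  let ?S = "{..<n - 1} \<union> {n + 1}"
  have S_bound: "?S \<subseteq> {..<length xs}"
    using less.prems by auto
  have "(xs ! m, xs ! n) \<in> A" if m: "m \<in> ?S" for m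
  proof (cases "m = n + 1")
    case True
    then show ?thesis using U_arc_Suc less.prems by simp
  next
    case False
    with m have "m < n - 1" by simp
    have in_V: "xs ! m \<in> V" "xs ! n \<in> V"
      using set_xs S_bound m less.prems by auto
    from \<open>m < n - 1\<close> less
    have "{u \<in> V. (u, xs ! m) \<in> A} = (!) xs ` ({..<m - 1} \<union> {m + 1})"
      by simp
    moreover have "xs ! n \<notin> (!) xs ` ({..<m - 1} \<union> {m + 1})"
      using \<open>m < n - 1\<close> less.prems by (subst nth_in_image_nth_iff[OF distinct_xs]) auto
    ultimately have "(xs ! n, xs ! m) \<notin> A"
      using in_V by (metis (no_types, lifting) mem_Collect_eq)
    moreover have "xs ! m \<noteq> xs ! n"
      using \<open>m < n - 1\<close> less.prems distinct_xs by (simp add: nth_eq_iff_index_eq)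
    ultimately show ?thesis
      using tournament_arc_iff_not_reverse[OF tournament in_V] by blast
  qed
  then have "(!) xs ` ?S \<subseteq> {u \<in> V. (u, xs ! n) \<in> A}"
    using set_xs S_bound by auto
  moreover have "card ((!) xs ` ?S) = indeg V A (xs ! n)"
  proof -
    have "card ((!) xs ` ?S) = card ?S"
      using S_bound by (intro card_image inj_on_nth distinct_xs) auto
    also have "\<dots> = max 1 n" by simp
    finally show ?thesis using U_indeg less.prems by simp
  qed
  ultimately show ?case
    by (rule tournament_in_nbrs_eq_if_card_eq[OF tournament])
qed

lemma U_arc_iff:
  assumes "a < length xs" "b < length xs"
  shows "(xs ! a, xs ! b) \<in> A \<longleftrightarrow> a = b + 1 \<or> a + 1 < b"
proof -
  have arc_into: "(xs ! a', xs ! b') \<in> A \<longleftrightarrow> a' \<in> {..<b' - 1} \<union> {b' + 1}"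
    if "b' + 1 < length xs" "a' < length xs" for a' b'
  proof -
    have "xs ! a' \<in> V"
      using that set_xs by auto
    then have "(xs ! a', xs ! b') \<in> A \<longleftrightarrow> xs ! a' \<in> (!) xs ` ({..<b' - 1} \<union> {b' + 1})"
      using U_in_nbrs[OF that(1)] by blast
    also have "\<dots> \<longleftrightarrow> a' \<in> {..<b' - 1} \<union> {b' + 1}"
      using that by (intro nth_in_image_nth_iff[OF distinct_xs]) auto
    finally show ?thesis .
  qed
  show ?thesis
  proof (cases "b + 1 < length xs")
    case True
    then show ?thesis using arc_into assms by auto
  next
    case b_last: False
    consider "a = b" | "a < b" using assms b_last by linarith
    then show ?thesis
    proof cases
      case 1
      then show ?thesis using tournament unfolding tournament_def by auto
    next
      case 2
      have "xs ! a \<noteq> xs ! b"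
        using 2 assms distinct_xs by (simp add: nth_eq_iff_index_eq)
      moreover have "xs ! a \<in> V" "xs ! b \<in> V"
        using set_xs assms by auto
      ultimately have "(xs ! a, xs ! b) \<in> A \<longleftrightarrow> (xs ! b, xs ! a) \<notin> A"
        by (intro tournament_arc_iff_not_reverse[OF tournament])
      also have "\<dots> \<longleftrightarrow> b \<noteq> a + 1"
        using arc_into[of a b] 2 assms b_last by auto
      finally show ?thesis using 2 by auto
    qed
  qed
qed

end

theorem mainTheorem17:
  fixes V :: "'a set" and A :: "('a \<times> 'a) set" and xs :: "'a list"
  assumes "tournament V A"
    and "set xs \<subseteq> V"
    and "distinct xs"
    and "U_property V A xs"
  shows "\<forall>i\<in>{1..length xs}. \<forall>j\<in>{1..length xs}.
           (xs ! (i - 1), xs ! (j - 1)) \<in> A \<longleftrightarrow> (i, j) \<in> U_arcs (length xs)"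
proof (intro ballI)
  fix i j assume i: "i \<in> {1..length xs}" and j: "j \<in> {1..length xs}"
  then have "(xs ! (i - 1), xs ! (j - 1)) \<in> A \<longleftrightarrow> i - 1 = j - 1 + 1 \<or> i - 1 + 1 < j - 1"
    by (intro U_arc_iff[OF assms]) auto
  also have "\<dots> \<longleftrightarrow> (i, j) \<in> U_arcs (length xs)"
    using i j unfolding U_arcs_def by auto
  finally show "(xs ! (i - 1), xs ! (j - 1)) \<in> A \<longleftrightarrow> (i, j) \<in> U_arcs (length xs)" .
qed

end
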